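(* Let $0\le\theta<1/2$ and $m\ge1$ an integer, and let $X_1,\dots,X_m$ be i.i.d. $\mathrm{Rad}(\tfrac12+\theta)$ random variables. Then $X=\sum_{i=1}^mX_i$ satisfies $$\Pr(X>0)-\Pr(X<0)\ge\sqrt{\frac{2}{\pi e}}\cdot\min\{\sqrt{m}\,\theta,1\}.$$
   Context: $\mathrm{Rad}(p)$ denotes the distribution of a random variable taking value $1$ with probability $p$ and $-1$ with probability $1-p$. *)

theory Defs
  imports "HOL-Probability.Probability"
begin

definition rad_pmf :: "real \<Rightarrow> int pmf" where
  "rad_pmf p = map_pmf (\<lambda>b. if b then 1 else -1) (bernoulli_pmf p)"

definition rad_sum_pmf :: "nat \<Rightarrow> real \<Rightarrow> int pmf" where
  "rad_sum_pmf m p = map_pmf (\<lambda>x. \<Sum>i\<in>{1..m}. x i) (Pi_pmf {1..m} 0 (\<lambda>_. rad_pmf p))"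

end

theory Submission
  imports Defs
begin

text \<open>
  Write X = 2 B - m with B binomial of parameters m and p = 1/2 + theta, so that
  P(X > 0) - P(X < 0) is the majority bias P(B > m/2) - P(B < m/2). Pascal's rule
  shows that the bias for m = 2n + 2 equals the one for m = 2n + 1, and that the latter is
  F_n(theta) = 2 theta * sum_{k <= n} C(2k,k) (1/4 - theta^2)^k, whose derivative telescopes
  to F_n' = 2 (2n + 1) C(2n,n) (1/4 - theta^2)^n. As F_n' is nonnegative and decreasing on
  [0, 1/2], F_n is increasing and F_n(theta) >= theta F_n'(theta). At
  t = 1/(2 sqrt(2n + 1)), Wallis' product (pi (2n + 1) C(2n,n)^2 >= 2 * 16^n) and
  (2n/(2n + 1))^(2n) >= exp(-1) give t F_n'(t) >= sqrt(2/(pi e)); comparing theta with t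
  yields the bound.
\<close>

lemma central_binomial_Suc:
  "(real n + 1) * real ((2 * Suc n) choose Suc n) = 2 * (2 * real n + 1) * real ((2 * n) choose n)"
proof -
  have "Suc n * ((2 * n + 2) choose Suc n) = (2 * n + 2) * ((2 * n + 1) choose n)"
    using Suc_times_binomial[of n "2 * n + 1"] by simp
  also have "(2 * n + 1) choose n = (2 * n + 1) choose Suc n"
    by (subst binomial_symmetric) auto
  finally have "Suc n * ((2 * n + 2) choose Suc n) = 2 * ((2 * n + 1) * ((2 * n) choose n))"
    using Suc_times_binomial[of n "2 * n"] by (simp add: algebra_simps)
  from arg_cong[OF this, of real] show ?thesis
    by (simp add: algebra_simps)
qed

lemma wallis_partial_product_eq:
  "(\<Prod>k=1..n. 4 * real k ^ 2 / (4 * real k ^ 2 - 1)) = 16 ^ n / (real ((2 * n) choose n) ^ 2 * (2 * real n + 1))"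
proof (induction n)
  case 0
  then show ?case by simp
next
  case (Suc n)
  define C where "C = real ((2 * n) choose n)"
  have "C > 0" unfolding C_def by simp
  have "4 * (real n + 1) ^ 2 - 1 = (2 * real n + 1) * (2 * real n + 3)"
    by (simp add: power2_eq_square algebra_simps)
  then have "16 ^ n / (C ^ 2 * (2 * real n + 1)) * (4 * (real n + 1) ^ 2 / (4 * (real n + 1) ^ 2 - 1))
      = 16 ^ Suc n / ((2 * (2 * real n + 1) * C / (real n + 1)) ^ 2 * (2 * real (Suc n) + 1))"
    using \<open>C > 0\<close> by (simp add: divide_simps power2_eq_square) (simp add: algebra_simps)
  also have "2 * (2 * real n + 1) * C / (real n + 1) = real ((2 * Suc n) choose Suc n)"
    unfolding C_def central_binomial_Suc[symmetric] by simp
  finally show ?case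
    using Suc.IH by (simp add: prod.cl_ivl_Suc C_def add.commute)
qed

lemma central_binomial_sq_lower_bound:
  "2 * 16 ^ n \<le> pi * (2 * real n + 1) * real ((2 * n) choose n) ^ 2"
proof -
  define W where "W n = (\<Prod>k=1..n. 4 * real k ^ 2 / (4 * real k ^ 2 - 1))" for n
  have factor_ge_1: "1 \<le> 4 * real k ^ 2 / (4 * real k ^ 2 - 1)" if "k \<ge> 1" for k
  proof -
    have "1 \<le> real k ^ 2"
      using that by (intro one_le_power) simp
    then show ?thesis
      by (simp add: le_divide_eq_1_pos)
  qed
  have "incseq W"
  proof (rule incseq_SucI)
    fix n
    have "W n \<ge> 0"
      unfolding W_def using factor_ge_1 by (intro prod_nonneg) (auto intro: order_trans[OF zero_le_one])
    moreover have "W (Suc n) = W n * (4 * real (Suc n) ^ 2 / (4 * real (Suc n) ^ 2 - 1))"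
      unfolding W_def by (simp add: prod.cl_ivl_Suc)
    ultimately show "W n \<le> W (Suc n)"
      using mult_left_mono[OF factor_ge_1[of "Suc n"]] by simp
  qed
  then have "W n \<le> pi / 2"
    using wallis unfolding W_def by (rule incseq_le)
  moreover have "0 < real ((2 * n) choose n) ^ 2 * (2 * real n + 1)"
    by simp
  ultimately show ?thesis
    unfolding W_def wallis_partial_product_eq by (simp add: pos_divide_le_eq mult_ac)
qed

lemma exp_minus_one_le_power: "exp (-1) \<le> (real k / (real k + 1)) ^ k"
proof (cases "k = 0")
  case False
  have "1 + 1 / real k = (real k + 1) / real k"
    using False by (simp add: field_simps)
  then have eq: "(1 + 1 / real k) ^ k = inverse ((real k / (real k + 1)) ^ k)"
    by (simp flip: power_inverse)
  have "exp (-1) = inverse (exp 1 :: real)"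
    by (rule exp_minus)
  also have "\<dots> \<le> inverse ((1 + 1 / real k) ^ k)"
    using False exp_ge_one_plus_x_over_n_power_n[of k 1] by (intro le_imp_inverse_le) (auto simp: add_pos_nonneg)
  also have "\<dots> = (real k / (real k + 1)) ^ k"
    unfolding eq by simp
  finally show ?thesis .
qed simp

definition binomial_tail :: "real \<Rightarrow> real \<Rightarrow> nat \<Rightarrow> nat \<Rightarrow> real" where
  "binomial_tail p q m j = (\<Sum>k=j..m. real (m choose k) * p ^ k * q ^ (m - k))"

lemma binomial_tail_eq_first_plus:
  "j \<le> m \<Longrightarrow> binomial_tail p q m j = real (m choose j) * p ^ j * q ^ (m - j) + binomial_tail p q m (Suc j)"
  unfolding binomial_tail_def by (simp add: sum.atLeast_Suc_atMost)

lemma binomial_tail_Suc_Suc: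
  assumes "j \<le> m" "p + q = 1"
  shows "binomial_tail p q (Suc m) (Suc j) =
           binomial_tail p q m (Suc j) + real (m choose j) * p ^ Suc j * q ^ (m - j)"
proof -
  define f where "f k = real (m choose k) * p ^ k * q ^ (m - k)" for k
  have pascal: "real (Suc m choose Suc i) * p ^ Suc i * q ^ (Suc m - Suc i) = p * f i + q * f (Suc i)"
    if "i \<le> m" for i
  proof (cases "i < m")
    case True
    then have "q ^ (m - i) = q * q ^ (m - Suc i)"
      by (metis Suc_diff_Suc power_Suc)
    then show ?thesis using True by (simp add: f_def algebra_simps)
  next
    case False
    with that show ?thesis by (simp add: f_def)
  qed
  have "binomial_tail p q (Suc m) (Suc j) = (\<Sum>i=j..m. p * f i + q * f (Suc i))"
    unfolding binomial_tail_def sum.shift_bounds_cl_Suc_ivl using pascal by (intro sum.cong) auto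
  also have "\<dots> = p * (\<Sum>i=j..m. f i) + q * (\<Sum>i=j..m. f (Suc i))"
    by (simp add: sum.distrib sum_distrib_left)
  also have "(\<Sum>i=j..m. f (Suc i)) = (\<Sum>i=Suc j..Suc m. f i)"
    by (rule sum.shift_bounds_cl_Suc_ivl[symmetric])
  also have "\<dots> = (\<Sum>i=Suc j..m. f i)"
    using assms(1) by (simp add: sum.cl_ivl_Suc f_def)
  also have "(\<Sum>i=j..m. f i) = f j + (\<Sum>i=Suc j..m. f i)"
    using assms(1) by (simp add: sum.atLeast_Suc_atMost)
  finally show ?thesis
    using assms(2) by (simp add: binomial_tail_def f_def algebra_simps flip: distrib_right)
qed

lemma binomial_tail_central_Suc:
  assumes "p + q = 1"
  shows "binomial_tail p q (2 * n + 2) (n + 2) =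
           binomial_tail p q (2 * n + 1) (n + 1) - real ((2 * n + 1) choose (n + 1)) * (p * q) ^ (n + 1)"
proof -
  define C where "C = real ((2 * n + 1) choose (n + 1))"
  have "binomial_tail p q (2 * n + 2) (n + 2) = binomial_tail p q (2 * n + 1) (n + 2) + C * p ^ (n + 2) * q ^ n"
    using binomial_tail_Suc_Suc[of "n + 1" "2 * n + 1" p q] assms by (simp add: C_def)
  moreover have "binomial_tail p q (2 * n + 1) (n + 1) = C * p ^ (n + 1) * q ^ n + binomial_tail p q (2 * n + 1) (n + 2)"
    using binomial_tail_eq_first_plus[of "n + 1" "2 * n + 1" p q] by (simp add: C_def)
  moreover have "C * p ^ (n + 2) * q ^ n - C * p ^ (n + 1) * q ^ n = - C * (p * q) ^ (n + 1)"
  proof -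
    have "C * p ^ (n + 2) * q ^ n - C * p ^ (n + 1) * q ^ n = C * p ^ (n + 1) * q ^ n * (p - 1)"
      by (simp add: algebra_simps)
    also have "p - 1 = - q"
      using assms by simp
    finally show ?thesis
      by (simp add: power_mult_distrib mult_ac)
  qed
  ultimately show ?thesis
    unfolding C_def[symmetric] by linarith
qed

definition majority_bias :: "real \<Rightarrow> real \<Rightarrow> nat \<Rightarrow> real" where
  "majority_bias p q m = binomial_tail p q m (m div 2 + 1) - binomial_tail q p m (m div 2 + 1)"

lemma majority_bias_even:
  assumes "p + q = 1"
  shows "majority_bias p q (2 * n + 2) = majority_bias p q (2 * n + 1)"
proof -
  have "(2 * n + 2) div 2 + 1 = n + 2" "(2 * n + 1) div 2 + 1 = n + 1" by auto
  then show ?thesis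
    using binomial_tail_central_Suc[of p q n] binomial_tail_central_Suc[of q p n] assms
    by (simp add: majority_bias_def mult.commute)
qed

lemma majority_bias_odd:
  assumes "p + q = 1"
  shows "majority_bias p q (2 * n + 1) = (p - q) * (\<Sum>k\<le>n. real ((2 * k) choose k) * (p * q) ^ k)"
proof (induction n)
  case 0
  then show ?case by (simp add: majority_bias_def binomial_tail_def)
next
  case (Suc n)
  have step: "binomial_tail a b (2 * n + 3) (n + 2) = binomial_tail a b (2 * n + 1) (n + 1)
      - real ((2 * n + 1) choose (n + 1)) * (a * b) ^ (n + 1) + real ((2 * n + 2) choose (n + 1)) * a ^ (n + 2) * b ^ (n + 1)"
    if "a + b = 1" for a b
    using binomial_tail_Suc_Suc[of "n + 1" "2 * n + 2" a b] binomial_tail_central_Suc[OF that, of n] that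
    by (simp add: numeral_3_eq_3)
  have "(2 * n + 3) div 2 + 1 = n + 2" "(2 * n + 1) div 2 + 1 = n + 1" by auto
  then have "majority_bias p q (2 * n + 3) = majority_bias p q (2 * n + 1)
      + real ((2 * n + 2) choose (n + 1)) * (p ^ (n + 2) * q ^ (n + 1) - q ^ (n + 2) * p ^ (n + 1))"
    using step[of p q] step[of q p] assms by (simp add: majority_bias_def algebra_simps)
  also have "p ^ (n + 2) * q ^ (n + 1) - q ^ (n + 2) * p ^ (n + 1) = (p - q) * (p * q) ^ (n + 1)"
    by (simp add: power_mult_distrib algebra_simps)
  finally have "majority_bias p q (2 * n + 3) = majority_bias p q (2 * n + 1)
      + (p - q) * (real ((2 * (n + 1)) choose (n + 1)) * (p * q) ^ (n + 1))"
    by (simp add: algebra_simps del: binomial_Suc_Suc)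
  also have "\<dots> = (p - q) * (\<Sum>k\<le>Suc n. real ((2 * k) choose k) * (p * q) ^ k)"
    unfolding Suc.IH by (simp add: sum.atMost_Suc distrib_left del: binomial_Suc_Suc)
  moreover have "2 * Suc n + 1 = 2 * n + 3" by simp
  ultimately show ?case by (simp only:)
qed

lemma sum_sign_eq_card:
  assumes "finite A"
  shows "(\<Sum>i\<in>A. if P i then 1 else -1 :: int) = 2 * int (card {i\<in>A. P i}) - int (card A)"
proof -
  have "card A = card {i\<in>A. P i} + card {i\<in>A. \<not> P i}"
    using assms by (subst card_Un_disjoint[symmetric]) (auto intro: arg_cong[where f=card])
  then show ?thesis
    using assms by (simp add: sum.If_cases Int_def)
qed

lemma rad_sum_pmf_eq_map_binomial_pmf:
  assumes "p \<in> {0..1}"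
  shows "rad_sum_pmf m p = map_pmf (\<lambda>k. 2 * int k - int m) (binomial_pmf m p)"
proof -
  let ?A = "{1..m}"
  let ?sign = "\<lambda>b::bool. if b then 1 else -1 :: int"
  have "Pi_pmf ?A 0 (\<lambda>_. rad_pmf p) = map_pmf (\<lambda>f x. if x \<in> ?A then f x else 0) (Pi_pmf ?A (-1) (\<lambda>_. rad_pmf p))"
    by (rule Pi_pmf_default_swap[symmetric]) auto
  also have "Pi_pmf ?A (-1) (\<lambda>_. rad_pmf p) = map_pmf (\<lambda>h. ?sign \<circ> h) (Pi_pmf ?A False (\<lambda>_. bernoulli_pmf p))"
    unfolding rad_pmf_def by (rule Pi_pmf_map) auto
  finally have "rad_sum_pmf m p = map_pmf (\<lambda>h. \<Sum>i\<in>?A. ?sign (h i)) (Pi_pmf ?A False (\<lambda>_. bernoulli_pmf p))"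
    unfolding rad_sum_pmf_def by (simp add: map_pmf_comp)
  also have "\<dots> = map_pmf (\<lambda>h. 2 * int (card {i\<in>?A. h i}) - int m) (Pi_pmf ?A False (\<lambda>_. bernoulli_pmf p))"
    by (simp add: sum_sign_eq_card)
  also have "\<dots> = map_pmf (\<lambda>k. 2 * int k - int m) (binomial_pmf m p)"
    using binomial_pmf_altdef'[of ?A m p False] assms by (simp add: map_pmf_comp)
  finally show ?thesis .
qed

lemma prob_binomial_pmf:
  assumes "0 < p" "p < 1"
  shows "measure_pmf.prob (binomial_pmf m p) S = (\<Sum>k\<in>S \<inter> {..m}. real (m choose k) * p ^ k * (1 - p) ^ (m - k))"
proof -
  have "measure_pmf.prob (binomial_pmf m p) S = measure_pmf.prob (binomial_pmf m p) (S \<inter> {..m})"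
    using measure_Int_set_pmf[of "binomial_pmf m p" S] assms by simp
  also have "\<dots> = (\<Sum>k\<in>S \<inter> {..m}. pmf (binomial_pmf m p) k)"
    by (rule measure_measure_pmf_finite) auto
  finally show ?thesis
    using assms by simp
qed

lemma prob_rad_sum_pos_minus_neg:
  assumes "0 < p" "p < 1"
  shows "measure_pmf.prob (rad_sum_pmf m p) {x. x > 0} - measure_pmf.prob (rad_sum_pmf m p) {x. x < 0}
           = majority_bias p (1 - p) m"
proof -
  let ?to_sum = "\<lambda>k. 2 * int k - int m"
  let ?B = "binomial_pmf m p"
  have "?to_sum -` {x. x > 0} \<inter> {..m} = {m div 2 + 1..m}" by auto
  then have pos: "measure_pmf.prob ?B (?to_sum -` {x. x > 0}) = binomial_tail p (1 - p) m (m div 2 + 1)"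
    unfolding prob_binomial_pmf[OF assms] binomial_tail_def by simp
  have "?to_sum -` {x. x < 0} \<inter> {..m} = (\<lambda>k. m - k) ` {m div 2 + 1..m}"
  proof (intro set_eqI iffI)
    fix k assume "k \<in> ?to_sum -` {x. x < 0} \<inter> {..m}"
    then show "k \<in> (\<lambda>k. m - k) ` {m div 2 + 1..m}"
      by (intro image_eqI[of _ _ "m - k"]) auto
  qed auto
  moreover have "inj_on (\<lambda>k. m - k) {m div 2 + 1..m}"
    by (rule inj_onI) auto
  ultimately have neg: "measure_pmf.prob ?B (?to_sum -` {x. x < 0}) = binomial_tail (1 - p) p m (m div 2 + 1)"
    unfolding prob_binomial_pmf[OF assms] binomial_tail_def
    by (simp add: sum.reindex binomial_symmetric[symmetric] mult_ac)
  have "rad_sum_pmf m p = map_pmf ?to_sum ?B"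
    using assms by (intro rad_sum_pmf_eq_map_binomial_pmf) auto
  then show ?thesis
    by (simp only: measure_map_pmf pos neg majority_bias_def)
qed

definition majority_bias_poly :: "nat \<Rightarrow> real \<Rightarrow> real" where
  "majority_bias_poly n t = 2 * t * (\<Sum>k\<le>n. real ((2 * k) choose k) * (1/4 - t\<^sup>2) ^ k)"

definition majority_bias_poly_deriv :: "nat \<Rightarrow> real \<Rightarrow> real" where
  "majority_bias_poly_deriv n t = 2 * (2 * real n + 1) * real ((2 * n) choose n) * (1/4 - t\<^sup>2) ^ n"

lemma majority_bias_half_plus:
  assumes "m \<ge> 1"
  shows "majority_bias (1/2 + t) (1/2 - t) m = majority_bias_poly ((m - 1) div 2) t"
proof -
  define n where "n = (m - 1) div 2"
  have "majority_bias (1/2 + t) (1/2 - t) m = majority_bias (1/2 + t) (1/2 - t) (2 * n + 1)"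
  proof (cases "even m")
    case True
    with assms have "m = 2 * n + 2"
      unfolding n_def by presburger
    then show ?thesis
      using majority_bias_even[of "1/2 + t" "1/2 - t" n] by simp
  next
    case False
    then have "m = 2 * n + 1"
      unfolding n_def by presburger
    then show ?thesis
      by simp
  qed
  also have "\<dots> = ((1/2 + t) - (1/2 - t)) * (\<Sum>k\<le>n. real ((2 * k) choose k) * ((1/2 + t) * (1/2 - t)) ^ k)"
    by (rule majority_bias_odd) simp
  also have "(1/2 + t) * (1/2 - t) = 1/4 - t\<^sup>2"
    by (simp add: power2_eq_square algebra_simps)
  also have "(1/2 + t) - (1/2 - t) = 2 * t"
    by simp
  finally show ?thesis
    unfolding n_def majority_bias_poly_def .
qed

lemma has_real_derivative_majority_bias_poly:
  "(majority_bias_poly n has_real_derivative majority_bias_poly_deriv n t) (at t)"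
proof (induction n)
  case 0
  show ?case
    unfolding majority_bias_poly_def majority_bias_poly_deriv_def by (auto intro!: derivative_eq_intros)
next
  case (Suc n)
  define C where "C = real ((2 * Suc n) choose Suc n)"
  define x where "x = 1/4 - t\<^sup>2"
  have poly_Suc: "majority_bias_poly (Suc n) = (\<lambda>t. majority_bias_poly n t + 2 * C * (t * (1/4 - t\<^sup>2) ^ Suc n))"
    by (simp add: fun_eq_iff majority_bias_poly_def C_def algebra_simps del: binomial_Suc_Suc)
  have "((\<lambda>t. 1/4 - t\<^sup>2) has_real_derivative - (2 * t)) (at t)"
    by (auto intro!: derivative_eq_intros)
  from DERIV_mult[OF DERIV_ident DERIV_power[OF this, of "Suc n"]]
  have d: "((\<lambda>t. t * (1/4 - t\<^sup>2) ^ Suc n) has_real_derivative x ^ Suc n - 2 * real (Suc n) * t\<^sup>2 * x ^ n) (at t)"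
    by (rule DERIV_cong) (simp add: x_def power2_eq_square algebra_simps)
  have deriv_Suc: "majority_bias_poly_deriv n t + 2 * C * (x ^ Suc n - 2 * real (Suc n) * t\<^sup>2 * x ^ n)
      = majority_bias_poly_deriv (Suc n) t"
  proof -
    have "majority_bias_poly_deriv n t = real (Suc n) * C * x ^ n"
      unfolding majority_bias_poly_deriv_def C_def x_def central_binomial_Suc[symmetric] by simp
    moreover have "t\<^sup>2 = 1/4 - x"
      unfolding x_def by simp
    ultimately have "majority_bias_poly_deriv n t + 2 * C * (x ^ Suc n - 2 * real (Suc n) * t\<^sup>2 * x ^ n)
        = real (Suc n) * C * x ^ n + 2 * C * (x ^ Suc n - 2 * real (Suc n) * (1/4 - x) * x ^ n)"
      by simp
    also have "\<dots> = 2 * (2 * real (Suc n) + 1) * C * x ^ Suc n"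
      by (simp add: algebra_simps)
    also have "\<dots> = majority_bias_poly_deriv (Suc n) t"
      unfolding majority_bias_poly_deriv_def C_def x_def ..
    finally show ?thesis .
  qed
  show ?case
    unfolding poly_Suc deriv_Suc[symmetric] by (rule DERIV_add[OF Suc.IH DERIV_cmult[OF d]])
qed

lemma majority_bias_poly_deriv_antimono:
  assumes "0 \<le> s" "s \<le> t" "t \<le> 1/2"
  shows "0 \<le> majority_bias_poly_deriv n t" "majority_bias_poly_deriv n t \<le> majority_bias_poly_deriv n s"
proof -
  have "t\<^sup>2 \<le> (1/2)\<^sup>2" "s\<^sup>2 \<le> t\<^sup>2"
    using assms by (auto intro: power_mono)
  then have "0 \<le> 1/4 - t\<^sup>2" "(1/4 - t\<^sup>2) ^ n \<le> (1/4 - s\<^sup>2) ^ n"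
    by (auto simp: power2_eq_square intro: power_mono)
  then show "0 \<le> majority_bias_poly_deriv n t" "majority_bias_poly_deriv n t \<le> majority_bias_poly_deriv n s"
    unfolding majority_bias_poly_deriv_def by (auto intro: mult_left_mono)
qed

lemma majority_bias_poly_mono:
  assumes "0 \<le> s" "s \<le> t" "t \<le> 1/2"
  shows "majority_bias_poly n s \<le> majority_bias_poly n t"
proof (cases "s = t")
  case False
  with assms obtain z where "s < z" "z < t"
    and z: "majority_bias_poly n t - majority_bias_poly n s = (t - s) * majority_bias_poly_deriv n z"
    using MVT2[of s t "majority_bias_poly n" "majority_bias_poly_deriv n"] has_real_derivative_majority_bias_poly
    by force
  with assms have "0 \<le> (t - s) * majority_bias_poly_deriv n z"
    using majority_bias_poly_deriv_antimono(1)[of z z n] by simp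
  with z show ?thesis
    by linarith
qed simp

lemma majority_bias_poly_ge_mult_deriv:
  assumes "0 \<le> t" "t \<le> 1/2"
  shows "t * majority_bias_poly_deriv n t \<le> majority_bias_poly n t"
proof (cases "t = 0")
  case False
  with assms obtain z where "0 < z" "z < t"
    and z: "majority_bias_poly n t - majority_bias_poly n 0 = (t - 0) * majority_bias_poly_deriv n z"
    using MVT2[of 0 t "majority_bias_poly n" "majority_bias_poly_deriv n"] has_real_derivative_majority_bias_poly
    by force
  with assms have "t * majority_bias_poly_deriv n t \<le> t * majority_bias_poly_deriv n z"
    using majority_bias_poly_deriv_antimono(2)[of z t n] by (simp add: mult_left_mono)
  moreover have "majority_bias_poly n 0 = 0"
    by (simp add: majority_bias_poly_def)
  ultimately show ?thesis
    using z by simp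
qed (simp add: majority_bias_poly_def)

lemma majority_bias_poly_deriv_threshold:
  fixes n :: nat
  defines "t \<equiv> 1 / (2 * sqrt (2 * real n + 1))"
  shows "sqrt (2 / (pi * exp 1)) \<le> t * majority_bias_poly_deriv n t"
proof -
  define M where "M = 2 * real n + 1"
  define C where "C = real ((2 * n) choose n)"
  define r where "r = real (2 * n) / (real (2 * n) + 1)"
  have "M > 0" "r \<ge> 0" "C > 0"
    unfolding M_def r_def C_def by simp_all
  have "t\<^sup>2 = 1 / (4 * M)"
    unfolding t_def M_def by (simp add: power2_eq_square)
  then have quarter: "1/4 - t\<^sup>2 = r / 4"
    unfolding r_def M_def by (simp add: field_simps)
  have "((r / 4) ^ n)\<^sup>2 = ((r / 4)\<^sup>2) ^ n"
    by (simp flip: power_mult add: mult.commute)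
  also have "\<dots> = r ^ (2 * n) / 16 ^ n"
    by (simp add: power_divide power_mult)
  finally have power_sq: "((r / 4) ^ n)\<^sup>2 = r ^ (2 * n) / 16 ^ n" .
  have "(t * majority_bias_poly_deriv n t)\<^sup>2 = t\<^sup>2 * (2 * M * C * (r / 4) ^ n)\<^sup>2"
    unfolding majority_bias_poly_deriv_def quarter M_def C_def by (simp add: power_mult_distrib)
  also have "\<dots> = M * C\<^sup>2 * ((r / 4) ^ n)\<^sup>2"
    unfolding \<open>t\<^sup>2 = 1 / (4 * M)\<close> using \<open>M > 0\<close> by (simp add: power2_eq_square field_simps)
  finally have square: "(t * majority_bias_poly_deriv n t)\<^sup>2 = (M * C\<^sup>2 / 16 ^ n) * r ^ (2 * n)"
    unfolding power_sq by simp
  have "2 / pi \<le> M * C\<^sup>2 / 16 ^ n"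
    using central_binomial_sq_lower_bound[of n] unfolding M_def C_def by (simp add: field_simps)
  moreover have "exp (-1) \<le> r ^ (2 * n)"
    unfolding r_def by (rule exp_minus_one_le_power)
  ultimately have "2 / pi * exp (-1) \<le> (M * C\<^sup>2 / 16 ^ n) * r ^ (2 * n)"
    using \<open>M > 0\<close> by (intro mult_mono) auto
  then have "2 / (pi * exp 1) \<le> (t * majority_bias_poly_deriv n t)\<^sup>2"
    unfolding square by (simp add: exp_minus field_simps)
  moreover have "0 \<le> t * majority_bias_poly_deriv n t"
    unfolding t_def using majority_bias_poly_deriv_antimono(1)[of 0 "1 / (2 * sqrt (2 * real n + 1))" n]
    by (simp add: field_simps)
  ultimately show ?thesis
    by (metis real_sqrt_le_mono real_sqrt_abs abs_of_nonneg)
qed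

lemma majority_bias_poly_lower_bound:
  assumes "0 \<le> \<theta>" "\<theta> \<le> 1/2" "real m \<le> 4 * (2 * real n + 1)"
  shows "sqrt (2 / (pi * exp 1)) * min (sqrt (real m) * \<theta>) 1 \<le> majority_bias_poly n \<theta>"
proof -
  define c where "c = sqrt (2 / (pi * exp 1))"
  define t where "t = 1 / (2 * sqrt (2 * real n + 1))"
  have "c \<ge> 0"
    unfolding c_def by simp
  have "sqrt (2 * real n + 1) \<ge> 1"
    by simp
  then have "0 < t" "t \<le> 1/2"
    unfolding t_def by (auto simp: field_simps)
  have threshold: "c \<le> t * majority_bias_poly_deriv n t"
    unfolding c_def t_def by (rule majority_bias_poly_deriv_threshold)
  show ?thesis
  proof (cases "\<theta> \<le> t")
    case True
    have "sqrt (real m) \<le> sqrt (4 * (2 * real n + 1))"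
      using assms(3) by simp
    also have "\<dots> = 2 * sqrt (2 * real n + 1)"
      by (simp only: real_sqrt_mult real_sqrt_four)
    also have "\<dots> = 1 / t"
      unfolding t_def by simp
    finally have "sqrt (real m) * c \<le> 1 / t * (t * majority_bias_poly_deriv n t)"
      using threshold \<open>0 < t\<close> \<open>c \<ge> 0\<close> by (intro mult_mono) auto
    also have "\<dots> = majority_bias_poly_deriv n t"
      using \<open>0 < t\<close> by simp
    also have "\<dots> \<le> majority_bias_poly_deriv n \<theta>"
      using assms(1) True \<open>t \<le> 1/2\<close> by (rule majority_bias_poly_deriv_antimono(2))
    finally have "\<theta> * (sqrt (real m) * c) \<le> \<theta> * majority_bias_poly_deriv n \<theta>"
      using assms(1) by (rule mult_left_mono)
    also have "\<dots> \<le> majority_bias_poly n \<theta>"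
      using assms(1,2) by (rule majority_bias_poly_ge_mult_deriv)
    finally have "\<theta> * (sqrt (real m) * c) \<le> majority_bias_poly n \<theta>" .
    moreover have "c * min (sqrt (real m) * \<theta>) 1 \<le> \<theta> * (sqrt (real m) * c)"
      using \<open>c \<ge> 0\<close> mult_left_mono[of "min (sqrt (real m) * \<theta>) 1" "sqrt (real m) * \<theta>" c]
      by (simp add: mult_ac)
    ultimately show ?thesis
      unfolding c_def by linarith
  next
    case False
    have "c * min (sqrt (real m) * \<theta>) 1 \<le> c"
      using \<open>c \<ge> 0\<close> mult_left_mono[of "min (sqrt (real m) * \<theta>) 1" 1 c] by simp
    also have "\<dots> \<le> t * majority_bias_poly_deriv n t"
      by (rule threshold)
    also have "\<dots> \<le> majority_bias_poly n t"
      using \<open>0 < t\<close> \<open>t \<le> 1/2\<close> by (intro majority_bias_poly_ge_mult_deriv) auto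
    also have "\<dots> \<le> majority_bias_poly n \<theta>"
      using False \<open>0 < t\<close> assms by (intro majority_bias_poly_mono) auto
    finally show ?thesis
      unfolding c_def .
  qed
qed

theorem lemma22:
  fixes \<theta> :: real and m :: nat
  assumes "0 \<le> \<theta>" and "\<theta> < 1/2" and "m \<ge> 1"
  shows "measure_pmf.prob (rad_sum_pmf m (1/2 + \<theta>)) {x. x > 0}
           - measure_pmf.prob (rad_sum_pmf m (1/2 + \<theta>)) {x. x < 0}
         \<ge> sqrt (2 / (pi * exp 1)) * min (sqrt (real m) * \<theta>) 1"
proof -
  define n where "n = (m - 1) div 2"
  have "measure_pmf.prob (rad_sum_pmf m (1/2 + \<theta>)) {x. x > 0}
          - measure_pmf.prob (rad_sum_pmf m (1/2 + \<theta>)) {x. x < 0}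
        = majority_bias (1/2 + \<theta>) (1/2 - \<theta>) m"
    using prob_rad_sum_pos_minus_neg[of "1/2 + \<theta>" m] assms by simp
  also have "\<dots> = majority_bias_poly n \<theta>"
    unfolding n_def using assms(3) by (rule majority_bias_half_plus)
  finally have bias: "measure_pmf.prob (rad_sum_pmf m (1/2 + \<theta>)) {x. x > 0}
      - measure_pmf.prob (rad_sum_pmf m (1/2 + \<theta>)) {x. x < 0} = majority_bias_poly n \<theta>" .
  have "m \<le> 2 * n + 2"
    unfolding n_def by linarith
  then have "real m \<le> 4 * (2 * real n + 1)"
    using of_nat_mono[where 'a = real] by fastforce
  then show ?thesis
    unfolding bias using majority_bias_poly_lower_bound[of \<theta> m n] assms(1,2) by simp
qed

end
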